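(* Let $\mu$ be a doubling measure on $\mathbb{R}^d$, $\Omega\subset\mathbb{R}^d$ a bounded convex domain, $r:\Omega\to(0,+\infty)$ an admissible radius function in $\Omega$ satisfying $|r(x)-r(y)|\leq|x-y|$ for all $x,y\in\Omega$, $0\leq\alpha<1$, $u\in C(\overline{\Omega})$, and $G$ a proper convex subdomain of $\Omega$ with $\overline{G}\subset\Omega$ compact. There are constants $C>0$ and $0<\theta\leq1$, depending only on $\mu$ and $d$, such that for all $x,y\in G$, $$|T_\alpha u(x)-T_\alpha u(y)| \leq \alpha\, \omega_{u,\widetilde{G}}(|x-y|) + (1-\alpha)\,C\,\|u\|_\infty\Big(\frac{|x-y|}{r(x)}\Big)^{\theta},$$ where $\widetilde{G}$ is the convex hull of $\bigcup_{x\in G}B_x$. In particular, if $r(x)\geq t_1>0$ for all $x\in G$, then $$\omega_{T_\alpha u, G}(t) \leq \alpha\,\omega_{u,\widetilde{G}}(t) + (1-\alpha)\,C\,\|u\|_\infty\, t_1^{-\theta} t^{\theta} \quad \text{for } 0\leq t\leq \operatorname{diam}(G).$$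
   Context: A doubling measure on $\mathbb{R}^d$ is a positive Borel measure $\mu$ with $0<\mu(B)<\infty$ for every open ball $B$ and $\mu(B(a,2s))\leq D\mu(B(a,s))$ for some $D\geq1$ and all $a$, $s>0$. An admissible radius function in $\Omega$ is $r:\Omega\to(0,\infty)$ with $0<r(x)\leq\operatorname{dist}(x,\partial\Omega)$; $B_x=B(x,r(x))$ (open ball). For $x\in\Omega$: $Su(x)=\frac12(\sup_{B_x}u+\inf_{B_x}u)$, $Mu(x)=\frac{1}{\mu(B_x)}\int_{B_x}u\,d\mu$, and $T_\alpha=\alpha S+(1-\alpha)M$. A concave modulus of continuity is a non-decreasing concave $\omega:[0,\infty)\to[0,\infty)$ with $\omega(0)=0$; for a convex set $E$ and a function $v$ continuous on $E$, $\omega_{v,E}$ denotes the lowest concave modulus of continuity of $v$ on $E$, so that $|v(x)-v(y)|\leq\omega_{v,E}(|x-y|)$ for $x,y\in E$. *)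

theory Defs
  imports "HOL-Analysis.Analysis" "HOL-Probability.Probability"
begin

definition doubling_measure :: "'a::euclidean_space measure \<Rightarrow> bool" where
  "doubling_measure mu \<longleftrightarrow>
     sets mu = sets borel \<and>
     (\<forall>a s. s > 0 \<longrightarrow> 0 < emeasure mu (ball a s) \<and> emeasure mu (ball a s) < \<infinity>) \<and>
     (\<exists>D::real. D \<ge> 1 \<and> (\<forall>a s. s > 0 \<longrightarrow>
         emeasure mu (ball a (2 * s)) \<le> ennreal D * emeasure mu (ball a s)))"

definition admissible_radius :: "'a::euclidean_space set \<Rightarrow> ('a \<Rightarrow> real) \<Rightarrow> bool" where
  "admissible_radius Omega r \<longleftrightarrow>
     (\<forall>x\<in>Omega. 0 < r x \<and> r x \<le> infdist x (frontier Omega))"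

definition S_op :: "('a::euclidean_space \<Rightarrow> real) \<Rightarrow> ('a \<Rightarrow> real) \<Rightarrow> 'a \<Rightarrow> real" where
  "S_op r u x = (Sup (u ` ball x (r x)) + Inf (u ` ball x (r x))) / 2"

definition M_op :: "'a::euclidean_space measure \<Rightarrow> ('a \<Rightarrow> real) \<Rightarrow> ('a \<Rightarrow> real) \<Rightarrow> 'a \<Rightarrow> real" where
  "M_op mu r u x = (1 / measure mu (ball x (r x))) * set_lebesgue_integral mu (ball x (r x)) u"

definition T_op :: "'a::euclidean_space measure \<Rightarrow> ('a \<Rightarrow> real) \<Rightarrow> real \<Rightarrow> ('a \<Rightarrow> real) \<Rightarrow> 'a \<Rightarrow> real" where
  "T_op mu r \<alpha> u x = \<alpha> * S_op r u x + (1 - \<alpha>) * M_op mu r u x"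

definition concave_modulus :: "(real \<Rightarrow> real) \<Rightarrow> bool" where
  "concave_modulus w \<longleftrightarrow> mono_on {0..} w \<and> concave_on {0..} w \<and> w 0 = 0 \<and>
      (\<forall>t\<ge>0. w t \<ge> 0)"

text \<open>Lowest concave modulus of continuity of v on E (pointwise infimum of all
  concave moduli of continuity of v on E; this infimum is itself one).\<close>
definition lowest_modulus :: "('a::euclidean_space \<Rightarrow> real) \<Rightarrow> 'a set \<Rightarrow> real \<Rightarrow> real" where
  "lowest_modulus v E t = Inf {w t | w. concave_modulus w \<and>
      (\<forall>x\<in>E. \<forall>y\<in>E. \<bar>v x - v y\<bar> \<le> w (dist x y))}"

definition sup_norm_on :: "'a set \<Rightarrow> ('a \<Rightarrow> real) \<Rightarrow> real" where
  "sup_norm_on A u = Sup ((\<lambda>x. \<bar>u x\<bar>) ` A)"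

end

theory Submission
  imports Defs
begin

text \<open>
  Since \<open>|r(x) - r(y)| \<le> |x - y|\<close>, every point
  of \<open>B\<^sub>x\<close> is within \<open>|x - y| + r(x) - r(y)\<close> of a point of \<open>B\<^sub>y\<close> and vice versa, so the supremum and
  infimum of \<open>u\<close> move by at most \<open>\<omega>(|x - y| \<plusminus> (r(x) - r(y)))\<close>; by concavity the two
  errors average to at most \<open>\<omega>(|x - y|)\<close>. For the averages, the symmetric difference of \<open>B\<^sub>x\<close> and
  \<open>B\<^sub>y\<close> lies in an annulus of width \<open>4|x - y|\<close> at the boundary of a ball comparable to \<open>B\<^sub>x\<close>.
  Doubling measures have annular decay: comparing each shell with the next inner one through a
  separated net on a sphere shows that a shell of relative width \<open>\<delta>\<close> carries a fraction
  \<open>O(\<delta>\<^sup>\<theta>)\<close> of the ball.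
\<close>

lemma min_1_le_powr:
  fixes a \<theta> :: real
  assumes "0 \<le> a" "0 < \<theta>" "\<theta> \<le> 1"
  shows "min 1 a \<le> a powr \<theta>"
  using assms powr_mono'[of \<theta> 1 a] ge_one_powr_ge_zero[of a \<theta>] by (cases "a \<le> 1") auto

lemma abs_quotient_diff_le:
  fixes I1 I2 m1 m2 M d :: real
  assumes "0 < m1" "0 < m2" "\<bar>I1 - I2\<bar> \<le> M * d" "\<bar>I2\<bar> \<le> M * m2" "\<bar>m1 - m2\<bar> \<le> d" "0 \<le> M"
  shows "\<bar>1/m1 * I1 - 1/m2 * I2\<bar> \<le> 2 * M * d / m1"
proof -
  have eq: "1/m1 * I1 - 1/m2 * I2 = (I1 - I2)/m1 + I2 * (1/m1 - 1/m2)"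
    by (simp add: diff_divide_distrib right_diff_distrib)
  have f: "1/m1 - 1/m2 = (m2 - m1)/(m1 * m2)"
    using assms(1,2) by (simp add: diff_frac_eq)
  have a: "\<bar>(I1 - I2)/m1\<bar> \<le> M * d / m1"
  proof -
    have "\<bar>(I1 - I2)/m1\<bar> = \<bar>I1 - I2\<bar>/m1" using assms(1) by (simp add: abs_divide)
    also have "\<dots> \<le> M * d / m1" using assms(1,3) by (simp add: divide_right_mono)
    finally show ?thesis .
  qed
  have "\<bar>I2 * (1/m1 - 1/m2)\<bar> = \<bar>I2\<bar> * \<bar>m1 - m2\<bar> / (m1 * m2)"
    unfolding f using assms(1,2) by (simp add: abs_mult abs_divide abs_minus_commute)
  also have "\<dots> \<le> (M * m2) * d / (m1 * m2)"
    using assms(1,2,4,5) by (intro divide_right_mono mult_mono) auto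
  also have "(M * m2) * d / (m1 * m2) = M * d / m1" using assms(2) by simp
  finally have b: "\<bar>I2 * (1/m1 - 1/m2)\<bar> \<le> M * d / m1" .
  have "\<bar>1/m1 * I1 - 1/m2 * I2\<bar> \<le> \<bar>(I1 - I2)/m1\<bar> + \<bar>I2 * (1/m1 - 1/m2)\<bar>"
    unfolding eq by (rule abs_triangle_ineq)
  also have "\<dots> \<le> M * d / m1 + M * d / m1" using a b by simp
  also have "\<dots> = 2 * M * d / m1" by simp
  finally show ?thesis .
qed

lemma abs_convex_comb_diff_le:
  fixes \<alpha> a1 a2 b1 b2 A B :: real
  assumes "0 \<le> \<alpha>" "\<alpha> \<le> 1" "\<bar>a1 - a2\<bar> \<le> A" "\<bar>b1 - b2\<bar> \<le> B"
  shows "\<bar>(\<alpha> * a1 + (1 - \<alpha>) * b1) - (\<alpha> * a2 + (1 - \<alpha>) * b2)\<bar> \<le> \<alpha> * A + (1 - \<alpha>) * B"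
proof -
  have "(\<alpha> * a1 + (1 - \<alpha>) * b1) - (\<alpha> * a2 + (1 - \<alpha>) * b2) = \<alpha> * (a1 - a2) + (1 - \<alpha>) * (b1 - b2)"
    by (simp add: algebra_simps)
  also have "\<bar>\<dots>\<bar> \<le> \<bar>\<alpha> * (a1 - a2)\<bar> + \<bar>(1 - \<alpha>) * (b1 - b2)\<bar>" by (rule abs_triangle_ineq)
  also have "\<dots> = \<alpha> * \<bar>a1 - a2\<bar> + (1 - \<alpha>) * \<bar>b1 - b2\<bar>" using assms(1,2) by (simp add: abs_mult)
  also have "\<dots> \<le> \<alpha> * A + (1 - \<alpha>) * B" using assms by (intro add_mono mult_left_mono) auto
  finally show ?thesis .
qed

lemma dist_along_line:
  fixes x v :: "'a::real_normed_vector"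
  shows "dist (x + a *\<^sub>R v) (x + b *\<^sub>R v) = \<bar>a - b\<bar> * norm v"
  by simp

lemma dist_along_line_0:
  fixes x v :: "'a::real_normed_vector"
  shows "dist x (x + a *\<^sub>R v) = \<bar>a\<bar> * norm v"
  using dist_along_line[of x 0 v a] by simp

lemma finite_maximal_separated_subset:
  fixes K :: "'a::metric_space set"
  assumes "compact K" "0 < s"
  shows "\<exists>Z. finite Z \<and> Z \<subseteq> K \<and> (\<forall>z\<in>Z. \<forall>z'\<in>Z. z \<noteq> z' \<longrightarrow> s \<le> dist z z')
           \<and> (\<forall>p\<in>K. \<exists>z\<in>Z. dist p z < s)"
proof -
  have cover: "K \<subseteq> (\<Union>c\<in>K. ball c (s/2))" using assms(2) by auto
  obtain T where T: "T \<subseteq> K" "finite T" "K \<subseteq> (\<Union>c\<in>T. ball c (s/2))"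
    using compactE_image[OF assms(1) open_ball cover] by blast
  define separated where "separated Z \<longleftrightarrow> finite Z \<and> Z \<subseteq> K \<and> (\<forall>z\<in>Z. \<forall>z'\<in>Z. z \<noteq> z' \<longrightarrow> s \<le> dist z z')" for Z
  have card_bound: "card Z < Suc (card T)" if "separated Z" for Z
  proof -
    have "\<forall>z\<in>Z. \<exists>c\<in>T. z \<in> ball c (s/2)"
    proof
      fix z assume "z \<in> Z"
      then have "z \<in> K" using that unfolding separated_def by blast
      then show "\<exists>c\<in>T. z \<in> ball c (s/2)" using T(3) by blast
    qed
    then obtain c where c: "\<And>z. z \<in> Z \<Longrightarrow> c z \<in> T \<and> z \<in> ball (c z) (s/2)" by metis
    have "inj_on c Z"
    proof (rule inj_onI)
      fix z z' assume "z \<in> Z" "z' \<in> Z" "c z = c z'"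
      have a: "dist z (c z) < s/2" using c[of z] \<open>z \<in> Z\<close> by (simp add: dist_commute)
      have b: "dist z' (c z) < s/2" using c[of z'] \<open>z' \<in> Z\<close> \<open>c z = c z'\<close> by (simp add: dist_commute)
      have "dist z z' < s" by (rule dist_triangle_half_l[OF a b])
      moreover have "\<forall>z\<in>Z. \<forall>z'\<in>Z. z \<noteq> z' \<longrightarrow> s \<le> dist z z'" using that unfolding separated_def by blast
      ultimately show "z = z'" using \<open>z \<in> Z\<close> \<open>z' \<in> Z\<close> by (meson leD)
    qed
    then have "card Z \<le> card T" using c T(2) by (intro card_inj_on_le) auto
    then show ?thesis by simp
  qed
  have "separated {}" unfolding separated_def by simp
  have card_bound': "\<forall>y. separated y \<longrightarrow> card y < Suc (card T)" using card_bound by blast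
  obtain Z where Z: "separated Z" "\<forall>Y. separated Y \<longrightarrow> card Y \<le> card Z"
    using ex_has_greatest_nat[OF \<open>separated {}\<close> card_bound'] by blast
  have Zf: "finite Z" and ZK: "Z \<subseteq> K" and Zs: "\<forall>z\<in>Z. \<forall>z'\<in>Z. z \<noteq> z' \<longrightarrow> s \<le> dist z z'"
    using Z(1) unfolding separated_def by auto
  have "\<forall>p\<in>K. \<exists>z\<in>Z. dist p z < s"
  proof (rule ccontr)
    assume "\<not> ?thesis"
    then obtain p where p1: "p \<in> K" and p2: "\<forall>z\<in>Z. \<not> dist p z < s" by blast
    have p3: "s \<le> dist p z" if "z \<in> Z" for z using p2 that by force
    have "p \<notin> Z" using p3[of p] assms(2) by auto
    have "\<forall>z\<in>insert p Z. \<forall>z'\<in>insert p Z. z \<noteq> z' \<longrightarrow> s \<le> dist z z'"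
      using Zs p3 by (auto simp: dist_commute)
    then have "separated (insert p Z)" using Zf ZK p1 unfolding separated_def by auto
    then have "card (insert p Z) \<le> card Z" using Z(2) by blast
    moreover have "card (insert p Z) = Suc (card Z)" using Zf \<open>p \<notin> Z\<close> by simp
    ultimately show False by simp
  qed
  then show ?thesis using Zf ZK Zs by blast
qed

lemma ex_point_in_ball_near:
  fixes x y z :: "'a::real_normed_vector"
  assumes ry: "0 < ry" and r: "\<bar>rx - ry\<bar> \<le> dist x y" and z: "z \<in> ball x rx"
  shows "\<exists>z'\<in>ball y ry. dist z z' \<le> dist x y + rx - ry"
proof -
  define t where "t = dist x y"
  define e where "e = t + rx - ry"
  have e0: "0 \<le> e" using r unfolding e_def t_def by auto
  define d where "d = dist y z"
  show ?thesis
  proof (cases "d < ry")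
    case True
    then show ?thesis using e0 unfolding d_def e_def t_def by (intro bexI[of _ z]) auto
  next
    case False
    have dpos: "0 < d" using False ry by simp
    have "d \<le> dist y x + dist x z" unfolding d_def by (rule dist_triangle)
    then have dlt: "d < t + rx" using z unfolding t_def by (simp add: dist_commute)
    define \<rho> where "\<rho> = max 0 (d - e)"
    have \<rho>: "0 \<le> \<rho>" "\<rho> < ry" "\<rho> \<le> d" "d - e \<le> \<rho>" using dlt ry dpos e0 unfolding \<rho>_def e_def by auto
    define z' where "z' = y + (\<rho>/d) *\<^sub>R (z - y)"
    have nd: "norm (z - y) = d" unfolding d_def by (simp add: dist_norm norm_minus_commute)
    have "dist y z' = \<bar>\<rho>/d\<bar> * d" unfolding z'_def dist_along_line_0 nd ..
    also have "\<dots> = \<rho>" using dpos \<rho>(1) by simp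
    finally have "z' \<in> ball y ry" using \<rho>(2) by simp
    moreover have "dist z z' = dist (y + 1 *\<^sub>R (z - y)) (y + (\<rho>/d) *\<^sub>R (z - y))" by (simp add: z'_def)
    moreover have "\<dots> = \<bar>1 - \<rho>/d\<bar> * d" unfolding dist_along_line nd ..
    moreover have "\<dots> = \<bar>(1 - \<rho>/d) * d\<bar>" using dpos by (simp add: abs_mult)
    moreover have "(1 - \<rho>/d) * d = d - \<rho>" using dpos by (simp add: left_diff_distrib)
    ultimately have "dist z z' = d - \<rho>" using \<rho>(3) by simp
    then have "dist z z' \<le> e" using \<rho>(4) by simp
    then show ?thesis using \<open>z' \<in> ball y ry\<close> unfolding e_def t_def by blast
  qed
qed

lemma Sup_Inf_image_le_of_near:
  fixes u :: "'a \<Rightarrow> real"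
  assumes A: "A \<noteq> {}" and B: "B \<noteq> {}"
    and bA: "\<And>a. a \<in> A \<Longrightarrow> \<bar>u a\<bar> \<le> K" and bB: "\<And>b. b \<in> B \<Longrightarrow> \<bar>u b\<bar> \<le> K"
    and m: "\<And>a. a \<in> A \<Longrightarrow> \<exists>b\<in>B. \<bar>u a - u b\<bar> \<le> e"
  shows "Sup (u ` A) \<le> Sup (u ` B) + e" "Inf (u ` B) \<le> Inf (u ` A) + e"
proof -
  have ba: "bdd_above (u ` B)" using bB by (intro bdd_aboveI2[where M=K]) (auto simp: abs_le_iff)
  have bb: "bdd_below (u ` B)" using bB by (intro bdd_belowI2[where m="-K"]) (force simp: abs_le_iff)
  show "Sup (u ` A) \<le> Sup (u ` B) + e"
  proof (rule cSUP_least[OF A])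
    fix a assume a: "a \<in> A"
    then obtain b where b: "b \<in> B" "\<bar>u a - u b\<bar> \<le> e" using m by blast
    have "u b \<le> Sup (u ` B)" using ba b(1) by (rule cSUP_upper2) simp
    then show "u a \<le> Sup (u ` B) + e" using b(2) by linarith
  qed
  have "Inf (u ` B) - e \<le> Inf (u ` A)"
  proof (rule cINF_greatest[OF A])
    fix a assume a: "a \<in> A"
    then obtain b where b: "b \<in> B" "\<bar>u a - u b\<bar> \<le> e" using m by blast
    have "Inf (u ` B) \<le> u b" using bb b(1) by (rule cINF_lower2) simp
    then show "Inf (u ` B) - e \<le> u a" using b(2) by linarith
  qed
  then show "Inf (u ` B) \<le> Inf (u ` A) + e" by linarith
qed

section \<open>Concave moduli of continuity\<close>

lemma concave_on_powr_pos:
  assumes "0 < \<theta>" "\<theta> \<le> 1"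
  shows "concave_on {0<..} (\<lambda>x::real. x powr \<theta>)"
proof (rule f''_le0_imp_concave[where f' = "\<lambda>x. \<theta> * x powr (\<theta> - 1)" and f'' = "\<lambda>x. \<theta> * ((\<theta> - 1) * x powr (\<theta> - 1 - 1))"])
  show "convex {0::real<..}" by (rule convex_real_interval)
  fix x :: real assume x: "x \<in> {0<..}"
  show "((\<lambda>x. x powr \<theta>) has_real_derivative \<theta> * x powr (\<theta> - 1)) (at x)"
    using x by (intro derivative_eq_intros) auto
  show "((\<lambda>x. \<theta> * x powr (\<theta> - 1)) has_real_derivative \<theta> * ((\<theta> - 1) * x powr (\<theta> - 1 - 1))) (at x)"
    using x by (intro derivative_eq_intros) auto
  show "\<theta> * ((\<theta> - 1) * x powr (\<theta> - 1 - 1)) \<le> 0"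
    using assms x by (intro mult_nonneg_nonpos mult_nonpos_nonneg) auto
qed

lemma concave_on_powr:
  assumes "0 < \<theta>" "\<theta> \<le> 1"
  shows "concave_on {0..} (\<lambda>x::real. x powr \<theta>)"
  unfolding concave_on_iff
proof (intro conjI ballI allI impI)
  show "convex {0::real..}" by (rule convex_real_interval)
  fix x y u v :: real assume xy: "x \<in> {0..}" "y \<in> {0..}" and uv: "0 \<le> u" "0 \<le> v" "u + v = 1"
  have small: "a \<le> a powr \<theta>" if "0 \<le> a" "a \<le> 1" for a
    using powr_mono'[of \<theta> 1 a] that assms by simp
  show "u * x powr \<theta> + v * y powr \<theta> \<le> (u *\<^sub>R x + v *\<^sub>R y) powr \<theta>"
  proof (cases "x = 0")
    case True
    have "v * y powr \<theta> \<le> v powr \<theta> * y powr \<theta>"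
      using small[of v] uv by (intro mult_right_mono) auto
    also have "\<dots> = (v * y) powr \<theta>" using uv xy by (simp add: powr_mult)
    finally show ?thesis using True assms by simp
  next
    case False
    show ?thesis
    proof (cases "y = 0")
      case True
      have "u * x powr \<theta> \<le> u powr \<theta> * x powr \<theta>"
        using small[of u] uv by (intro mult_right_mono) auto
      also have "\<dots> = (u * x) powr \<theta>" using uv xy by (simp add: powr_mult)
      finally show ?thesis using True assms by simp
    next
      case False
      have "x \<in> {0<..}" "y \<in> {0<..}" using xy \<open>x \<noteq> 0\<close> False by auto
      then show ?thesis using concave_on_powr_pos[OF assms] uv unfolding concave_on_iff by blast
    qed
  qed
qed

lemma concave_on_affine:
  fixes a b :: real
  shows "concave_on {0..} (\<lambda>t. a + b * t)"
  unfolding concave_on_iff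
proof (intro conjI ballI allI impI)
  show "convex {0::real..}" by (rule convex_real_interval)
  fix x y u v :: real assume "u + v = 1"
  then have v: "v = 1 - u" by simp
  show "u * (a + b * x) + v * (a + b * y) \<le> a + b * (u *\<^sub>R x + v *\<^sub>R y)"
    unfolding v by (simp add: algebra_simps)
qed

lemma concave_on_Inf_family:
  fixes f :: "'i \<Rightarrow> real \<Rightarrow> real"
  assumes I: "I \<noteq> {}"
    and cc: "\<And>i. i \<in> I \<Longrightarrow> concave_on {0..} (f i)"
    and mo: "\<And>i. i \<in> I \<Longrightarrow> mono_on {0..} (f i)"
    and nn: "\<And>i t. i \<in> I \<Longrightarrow> 0 \<le> t \<Longrightarrow> 0 \<le> f i t"
  defines "F \<equiv> (\<lambda>t. Inf ((\<lambda>i. f i t) ` I))"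
  shows "concave_on {0..} F" "mono_on {0..} F" "\<And>t. 0 \<le> t \<Longrightarrow> 0 \<le> F t"
    "\<And>i t. i \<in> I \<Longrightarrow> 0 \<le> t \<Longrightarrow> F t \<le> f i t"
proof -
  have bdd: "bdd_below ((\<lambda>i. f i t) ` I)" if "0 \<le> t" for t
    using nn that by (intro bdd_belowI[of _ 0]) auto
  show le: "\<And>i t. i \<in> I \<Longrightarrow> 0 \<le> t \<Longrightarrow> F t \<le> f i t"
    unfolding F_def using bdd by (intro cInf_lower) auto
  have ge: "c \<le> F t" if "\<And>i. i \<in> I \<Longrightarrow> c \<le> f i t" for c t
    unfolding F_def using I that by (intro cInf_greatest) auto
  show "\<And>t. 0 \<le> t \<Longrightarrow> 0 \<le> F t" using ge nn by blast
  show "mono_on {0..} F"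
  proof (rule mono_onI)
    fix a b :: real assume ab: "a \<in> {0..}" "b \<in> {0..}" "a \<le> b"
    show "F a \<le> F b"
    proof (rule ge)
      fix i assume i: "i \<in> I"
      have "F a \<le> f i a" using le[OF i] ab by auto
      also have "f i a \<le> f i b" by (rule mono_onD[OF mo[OF i]]) (use ab in auto)
      finally show "F a \<le> f i b" .
    qed
  qed
  show "concave_on {0..} F"
    unfolding concave_on_iff
  proof (intro conjI ballI allI impI)
    show "convex {0::real..}" by (rule convex_real_interval)
    fix x y :: real and u v :: real
    assume xy: "x \<in> {0..}" "y \<in> {0..}" and uv: "0 \<le> u" "0 \<le> v" "u + v = 1"
    show "u * F x + v * F y \<le> F (u *\<^sub>R x + v *\<^sub>R y)"
    proof (rule ge)
      fix i assume i: "i \<in> I"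
      have "u * F x + v * F y \<le> u * f i x + v * f i y"
        using le[OF i] xy uv by (intro add_mono mult_left_mono) auto
      also have "\<dots> \<le> f i (u *\<^sub>R x + v *\<^sub>R y)"
        using cc[OF i] xy uv unfolding concave_on_iff by blast
      finally show "u * F x + v * F y \<le> f i (u *\<^sub>R x + v *\<^sub>R y)" .
    qed
  qed
qed

lemma lowest_modulus_eq_Inf_image:
  "lowest_modulus v E t = Inf ((\<lambda>w. w t) ` {w. concave_modulus w \<and> (\<forall>x\<in>E. \<forall>y\<in>E. \<bar>v x - v y\<bar> \<le> w (dist x y))})"
  unfolding lowest_modulus_def by (rule arg_cong[where f=Inf]) blast

lemma lowest_modulus_le:
  assumes "concave_modulus w" "\<forall>x\<in>E. \<forall>y\<in>E. \<bar>v x - v y\<bar> \<le> w (dist x y)" "0 \<le> t"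
  shows "lowest_modulus v E t \<le> w t"
  unfolding lowest_modulus_eq_Inf_image
proof (rule cInf_lower)
  show "w t \<in> (\<lambda>w. w t) ` {w. concave_modulus w \<and> (\<forall>x\<in>E. \<forall>y\<in>E. \<bar>v x - v y\<bar> \<le> w (dist x y))}"
    using assms(1,2) by blast
  show "bdd_below ((\<lambda>w. w t) ` {w. concave_modulus w \<and> (\<forall>x\<in>E. \<forall>y\<in>E. \<bar>v x - v y\<bar> \<le> w (dist x y))})"
    using assms(3) by (intro bdd_belowI[of _ 0]) (auto simp: concave_modulus_def)
qed

lemma ex_concave_modulus:
  fixes v :: "'a::euclidean_space \<Rightarrow> real"
  assumes uc: "uniformly_continuous_on E v" and B: "0 \<le> B" "\<And>x. x \<in> E \<Longrightarrow> \<bar>v x\<bar> \<le> B"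
  shows "\<exists>w. concave_modulus w \<and> (\<forall>x\<in>E. \<forall>y\<in>E. \<bar>v x - v y\<bar> \<le> w (dist x y))"
proof -
  have "\<forall>n::nat. \<exists>d>0. \<forall>x\<in>E. \<forall>x'\<in>E. dist x' x < d \<longrightarrow> dist (v x') (v x) < 1 / (real n + 1)"
    using uc unfolding uniformly_continuous_on_def by auto
  then obtain \<delta> where \<delta>: "\<And>n. \<delta> n > 0"
    "\<And>n x x'. x \<in> E \<Longrightarrow> x' \<in> E \<Longrightarrow> dist x' x < \<delta> n \<Longrightarrow> dist (v x') (v x) < 1 / (real n + 1)"
    by metis
  define f where "f n t = 1 / (real n + 1) + (2 * B / \<delta> n) * t" for n t
  define F where "F = (\<lambda>t. Inf ((\<lambda>n. f n t) ` (UNIV :: nat set)))"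
  have cc: "concave_on {0..} (f n)" for n unfolding f_def by (rule concave_on_affine)
  have mo: "mono_on {0..} (f n)" for n
    unfolding f_def using B(1) \<delta>(1)[of n] by (intro mono_onI) (auto intro!: mult_left_mono divide_right_mono)
  have nn: "0 \<le> f n t" if "0 \<le> t" for n t
    unfolding f_def using B(1) \<delta>(1)[of n] that by simp
  note fam = concave_on_Inf_family[of UNIV f, OF _ cc mo nn]
  have F0: "F 0 = 0"
  proof -
    have "F 0 \<le> 0"
    proof (rule ccontr)
      assume "\<not> F 0 \<le> 0"
      then have c: "0 < F 0" by simp
      obtain n :: nat where "1 / F 0 < real n" using reals_Archimedean2 by blast
      then have "1 / (real n + 1) < F 0" using c by (simp add: field_simps)
      moreover have "F 0 \<le> f n 0" using fam(4)[of n 0] unfolding F_def by simp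
      ultimately show False unfolding f_def by simp
    qed
    then show ?thesis using fam(3)[of 0] unfolding F_def by simp
  qed
  have cm: "concave_modulus F" unfolding concave_modulus_def using F0 unfolding F_def using fam by auto
  have md: "\<bar>v x - v y\<bar> \<le> F (dist x y)" if "x \<in> E" "y \<in> E" for x y
    unfolding F_def
  proof (rule cInf_greatest)
    show "(\<lambda>n. f n (dist x y)) ` UNIV \<noteq> {}" by simp
    fix c assume "c \<in> (\<lambda>n. f n (dist x y)) ` UNIV"
    then obtain n where c: "c = f n (dist x y)" by auto
    show "\<bar>v x - v y\<bar> \<le> c"
    proof (cases "dist x y < \<delta> n")
      case True
      then have "dist (v x) (v y) < 1 / (real n + 1)" using \<delta>(2)[OF that(2) that(1)] by simp
      then have "\<bar>v x - v y\<bar> < 1 / (real n + 1)" by (simp add: dist_real_def)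
      moreover have "0 \<le> (2 * B / \<delta> n) * dist x y" using B(1) \<delta>(1)[of n] by simp
      ultimately show ?thesis unfolding c f_def by linarith
    next
      case False
      have "\<bar>v x - v y\<bar> \<le> 2 * B" using B(2)[OF that(1)] B(2)[OF that(2)] by linarith
      also have "2 * B = (2 * B / \<delta> n) * \<delta> n" using \<delta>(1)[of n] by simp
      also have "\<dots> \<le> (2 * B / \<delta> n) * dist x y"
        using False B(1) \<delta>(1)[of n] by (intro mult_left_mono) auto
      also have "\<dots> \<le> c" unfolding c f_def by simp
      finally show ?thesis .
    qed
  qed
  show ?thesis using cm md by blast
qed

lemma
  fixes v :: "'a::euclidean_space \<Rightarrow> real"
  assumes K: "compact K" "continuous_on K v" and E: "E \<subseteq> K"
  shows concave_modulus_lowest_modulus: "concave_modulus (lowest_modulus v E)"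
    and abs_diff_le_lowest_modulus:
      "\<And>x y. x \<in> E \<Longrightarrow> y \<in> E \<Longrightarrow> \<bar>v x - v y\<bar> \<le> lowest_modulus v E (dist x y)"
proof -
  have uc: "uniformly_continuous_on E v"
    using compact_uniformly_continuous[OF K(2,1)] E unfolding uniformly_continuous_on_def by (meson subsetD)
  have "bounded (v ` K)" using compact_continuous_image[OF K(2,1)] by (rule compact_imp_bounded)
  then obtain B where B: "0 < B" "\<And>x. x \<in> K \<Longrightarrow> \<bar>v x\<bar> \<le> B"
    unfolding bounded_pos by auto
  have B: "0 \<le> B" "\<And>x. x \<in> E \<Longrightarrow> \<bar>v x\<bar> \<le> B" using B E by auto
  define W where "W = {w. concave_modulus w \<and> (\<forall>x\<in>E. \<forall>y\<in>E. \<bar>v x - v y\<bar> \<le> w (dist x y))}"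
  have W: "W \<noteq> {}" using ex_concave_modulus[OF uc B] unfolding W_def by blast
  have L: "lowest_modulus v E = (\<lambda>t. Inf ((\<lambda>w. w t) ` W))"
    unfolding W_def by (rule ext) (rule lowest_modulus_eq_Inf_image)
  have W_props: "concave_on {0..} w" "mono_on {0..} w" "\<And>t. 0 \<le> t \<Longrightarrow> 0 \<le> w t" if "w \<in> W" for w
    using that unfolding W_def concave_modulus_def by auto
  have Inf_W: "concave_on {0..} (lowest_modulus v E)" "mono_on {0..} (lowest_modulus v E)"
    "\<And>t. 0 \<le> t \<Longrightarrow> 0 \<le> lowest_modulus v E t"
    unfolding L using concave_on_Inf_family[of W "\<lambda>w. w"] W W_props by simp_all
  have "lowest_modulus v E 0 = 0"
  proof -
    have "(\<lambda>w. w 0) ` W = {0}" using W unfolding W_def concave_modulus_def by auto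
    then show ?thesis unfolding L by simp
  qed
  then show "concave_modulus (lowest_modulus v E)" unfolding concave_modulus_def using Inf_W by auto
  fix x y assume "x \<in> E" "y \<in> E"
  then show "\<bar>v x - v y\<bar> \<le> lowest_modulus v E (dist x y)"
    unfolding L using W by (intro cInf_greatest) (auto simp: W_def)
qed

lemma concave_modulus_powr:
  assumes "0 < \<theta>" "\<theta> \<le> 1"
  shows "concave_modulus (\<lambda>t. t powr \<theta>)"
  unfolding concave_modulus_def
proof (intro conjI allI impI)
  show "mono_on {0..} (\<lambda>t. t powr \<theta>)"
    using assms by (intro mono_onI) (auto intro: powr_mono2)
  show "concave_on {0..} (\<lambda>t. t powr \<theta>)" by (rule concave_on_powr[OF assms])
qed simp_all

lemma concave_modulus_lincomb:
  assumes f: "concave_modulus f" and g: "concave_modulus g" and ab: "0 \<le> a" "0 \<le> b"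
  shows "concave_modulus (\<lambda>t. a * f t + b * g t)"
  unfolding concave_modulus_def
proof (intro conjI allI impI)
  show "concave_on {0..} (\<lambda>t. a * f t + b * g t)"
    using f g ab unfolding concave_modulus_def by (intro concave_on_add concave_on_cmul) auto
  show "mono_on {0..} (\<lambda>t. a * f t + b * g t)"
  proof (rule mono_onI)
    fix s t :: real assume "s \<in> {0..}" "t \<in> {0..}" "s \<le> t"
    moreover have "mono_on {0..} f" "mono_on {0..} g" using f g by (simp_all add: concave_modulus_def)
    ultimately have "f s \<le> f t" "g s \<le> g t" by (simp_all add: mono_onD)
    then show "a * f s + b * g s \<le> a * f t + b * g t"
      using ab by (intro add_mono mult_left_mono)
  qed
  have "f 0 = 0" "g 0 = 0" "\<And>t. 0 \<le> t \<Longrightarrow> 0 \<le> f t \<and> 0 \<le> g t"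
    using f g unfolding concave_modulus_def by simp_all
  then show "a * f 0 + b * g 0 = 0" "\<And>t. 0 \<le> t \<Longrightarrow> 0 \<le> a * f t + b * g t"
    using ab by simp_all
qed

lemma lowest_modulus_le_lincomb:
  assumes "concave_modulus f" "concave_modulus g" "0 \<le> a" "0 \<le> b" "0 \<le> t"
    and "\<forall>x\<in>E. \<forall>y\<in>E. \<bar>v x - v y\<bar> \<le> a * f (dist x y) + b * g (dist x y)"
  shows "lowest_modulus v E t \<le> a * f t + b * g t"
  using lowest_modulus_le[OF concave_modulus_lincomb[OF assms(1-4)] assms(6,5)] .

section \<open>The operator S\<close>

lemma ball_subset_of_admissible_radius:
  fixes Omega :: "'a::euclidean_space set"
  assumes "open Omega" "admissible_radius Omega r" "x \<in> Omega"
  shows "ball x (r x) \<subseteq> Omega"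
proof (rule ccontr)
  assume "\<not> ?thesis"
  then have "ball x (r x) - Omega \<noteq> {}" by blast
  moreover have "ball x (r x) \<inter> Omega \<noteq> {}" using assms(2,3) unfolding admissible_radius_def by force
  ultimately have "ball x (r x) \<inter> frontier Omega \<noteq> {}"
    using connected_Int_frontier[OF connected_ball] by blast
  then obtain p where p: "p \<in> ball x (r x)" "p \<in> frontier Omega" by blast
  have "infdist x (frontier Omega) \<le> dist x p" using p(2) by (rule infdist_le)
  moreover have "r x \<le> infdist x (frontier Omega)" using assms(2,3) unfolding admissible_radius_def by blast
  ultimately show False using p(1) by simp
qed

lemma convex_hull_balls_subset:
  fixes Omega :: "'a::euclidean_space set"
  assumes "open Omega" "convex Omega" "admissible_radius Omega r" "G \<subseteq> Omega"
  shows "convex hull (\<Union>z\<in>G. ball z (r z)) \<subseteq> Omega"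
  using assms ball_subset_of_admissible_radius by (intro hull_minimal) blast+

lemma abs_le_sup_norm_on:
  assumes "compact K" "continuous_on K u" "z \<in> K"
  shows "\<bar>u z\<bar> \<le> sup_norm_on K u"
  unfolding sup_norm_on_def using assms
  by (intro cSUP_upper2 bounded_imp_bdd_above compact_imp_bounded compact_continuous_image continuous_on_rabs) auto

lemma S_op_diff_le:
  fixes u :: "'a::euclidean_space \<Rightarrow> real"
  assumes rx: "0 < r x" and ry: "0 < r y" and r: "\<bar>r x - r y\<bar> \<le> dist x y"
    and H: "ball x (r x) \<subseteq> H" "ball y (r y) \<subseteq> H"
    and bnd: "\<And>z. z \<in> H \<Longrightarrow> \<bar>u z\<bar> \<le> K"
    and cm: "concave_modulus l"
    and mod: "\<And>a b. a \<in> H \<Longrightarrow> b \<in> H \<Longrightarrow> \<bar>u a - u b\<bar> \<le> l (dist a b)"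
  shows "\<bar>S_op r u x - S_op r u y\<bar> \<le> l (dist x y)"
proof -
  define t where "t = dist x y"
  define e1 where "e1 = t + r x - r y"
  define e2 where "e2 = t + r y - r x"
  have e: "0 \<le> e1" "0 \<le> e2" using r unfolding e1_def e2_def t_def by auto
  have mono: "l a \<le> l b" if "0 \<le> a" "a \<le> b" for a b
    using cm that unfolding concave_modulus_def by (auto intro: mono_onD)
  have ne: "ball x (r x) \<noteq> {}" "ball y (r y) \<noteq> {}" using rx ry by auto
  have m1: "\<exists>b\<in>ball y (r y). \<bar>u a - u b\<bar> \<le> l e1" if a: "a \<in> ball x (r x)" for a
  proof -
    obtain b where b: "b \<in> ball y (r y)" "dist a b \<le> e1"
      using ex_point_in_ball_near[OF ry r a] unfolding e1_def t_def by blast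
    have "\<bar>u a - u b\<bar> \<le> l (dist a b)" using mod H a b(1) by blast
    also have "\<dots> \<le> l e1" using b(2) by (intro mono) auto
    finally show ?thesis using b(1) by blast
  qed
  have r': "\<bar>r y - r x\<bar> \<le> dist y x" using r by (simp add: dist_commute abs_minus_commute)
  have m2: "\<exists>b\<in>ball x (r x). \<bar>u a - u b\<bar> \<le> l e2" if a: "a \<in> ball y (r y)" for a
  proof -
    obtain b where b: "b \<in> ball x (r x)" "dist a b \<le> e2"
      using ex_point_in_ball_near[OF rx r' a] unfolding e2_def t_def by (auto simp: dist_commute)
    have "\<bar>u a - u b\<bar> \<le> l (dist a b)" using mod H a b(1) by blast
    also have "\<dots> \<le> l e2" using b(2) by (intro mono) auto
    finally show ?thesis using b(1) by blast
  qed
  have bx: "\<And>a. a \<in> ball x (r x) \<Longrightarrow> \<bar>u a\<bar> \<le> K" and by': "\<And>a. a \<in> ball y (r y) \<Longrightarrow> \<bar>u a\<bar> \<le> K"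
    using H bnd by auto
  note c1 = Sup_Inf_image_le_of_near[OF ne(1) ne(2) bx by' m1]
  note c2 = Sup_Inf_image_le_of_near[OF ne(2) ne(1) by' bx m2]
  have conc: "1/2 * l e1 + 1/2 * l e2 \<le> l t"
  proof -
    have "concave_on {0..} l" using cm unfolding concave_modulus_def by simp
    then have "(1 - 1/2) * l e1 + 1/2 * l e2 \<le> l ((1 - 1/2) *\<^sub>R e1 + (1/2) *\<^sub>R e2)"
      using e by (intro concave_onD) auto
    moreover have "(1 - 1/2) *\<^sub>R e1 + (1/2) *\<^sub>R e2 = t" unfolding e1_def e2_def by (simp add: field_simps)
    ultimately show ?thesis by simp
  qed
  have f1: "Sup (u ` ball x (r x)) \<le> Sup (u ` ball y (r y)) + l e1" "Inf (u ` ball y (r y)) \<le> Inf (u ` ball x (r x)) + l e1"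
    using c1 by simp_all
  have f2: "Sup (u ` ball y (r y)) \<le> Sup (u ` ball x (r x)) + l e2" "Inf (u ` ball x (r x)) \<le> Inf (u ` ball y (r y)) + l e2"
    using c2 by simp_all
  show ?thesis unfolding S_op_def abs_le_iff using f1 f2 conc unfolding t_def by argo
qed

lemma shell_subset_Union_balls:
  fixes x :: "'a::real_normed_vector"
  assumes s: "0 < s" "s < R" and net: "\<forall>p\<in>sphere x (R - s/2). \<exists>z\<in>Z. dist p z < s"
  shows "ball x R - ball x (R - s) \<subseteq> (\<Union>z\<in>Z. ball z (2 * s))"
proof
  define \<rho> where "\<rho> = R - s/2"
  have \<rho>_pos: "0 < \<rho>" using s unfolding \<rho>_def by simp
  fix p assume p: "p \<in> ball x R - ball x (R - s)"
  define d where "d = dist x p"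
  have d: "R - s \<le> d" "d < R" using p unfolding d_def by auto
  have dpos: "0 < d" using d s by simp
  have nd: "norm (p - x) = d" unfolding d_def by (simp add: dist_norm norm_minus_commute)
  define q where "q = x + (\<rho>/d) *\<^sub>R (p - x)"
  have "dist x q = \<rho>" unfolding q_def dist_along_line_0 nd using dpos \<rho>_pos by simp
  then have "q \<in> sphere x (R - s/2)" by (simp add: \<rho>_def)
  then obtain z where z: "z \<in> Z" "dist q z < s" using net by blast
  have "dist p q = dist (x + 1 *\<^sub>R (p - x)) (x + (\<rho>/d) *\<^sub>R (p - x))" by (simp add: q_def)
  also have "\<dots> = \<bar>1 - \<rho>/d\<bar> * d" unfolding dist_along_line nd by simp
  also have "\<dots> = \<bar>(1 - \<rho>/d) * d\<bar>" using dpos by (simp add: abs_mult)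
  also have "(1 - \<rho>/d) * d = d - \<rho>" using dpos by (simp add: left_diff_distrib)
  also have "\<bar>d - \<rho>\<bar> \<le> s/2" using d \<rho>_def by (intro abs_leI) linarith+
  finally have "dist p q \<le> s/2" .
  then have "dist p z < 2 * s" using z(2) dist_triangle[of p z q] s by linarith
  then show "p \<in> (\<Union>z\<in>Z. ball z (2 * s))" using z(1) by (auto simp: dist_commute)
qed

section \<open>Doubling measures: annular decay and ball averages\<close>

locale doubling =
  fixes mu :: "'a::euclidean_space measure" and D :: real
  assumes sets_mu: "sets mu = sets borel"
    and emeasure_ball_finite: "emeasure mu (ball a s) < \<infinity>"
    and measure_ball_pos: "0 < s \<Longrightarrow> 0 < measure mu (ball a s)"
    and doubling_const_ge_1: "1 \<le> D"
    and measure_ball_double: "measure mu (ball a (2 * s)) \<le> D * measure mu (ball a s)"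
begin

lemma borel_sets_mu [measurable]: "S \<in> sets borel \<Longrightarrow> S \<in> sets mu"
  using sets_mu by simp

lemma space_mu: "space mu = UNIV"
  using sets_eq_imp_space_eq[OF sets_mu] by simp

lemma bounded_borel_fmeasurable: "bounded S \<Longrightarrow> S \<in> sets borel \<Longrightarrow> S \<in> fmeasurable mu"
proof -
  assume S: "bounded S" "S \<in> sets borel"
  obtain a e where "S \<subseteq> ball a e" using S(1) bounded_subset_ballD by blast
  then have "emeasure mu S \<le> emeasure mu (ball a e)" by (intro emeasure_mono) auto
  then show ?thesis using emeasure_ball_finite[of a e] S(2) by (auto simp: fmeasurable_def)
qed

lemma measure_mono_bounded:
  "A \<subseteq> B \<Longrightarrow> A \<in> sets borel \<Longrightarrow> bounded B \<Longrightarrow> B \<in> sets borel \<Longrightarrow> measure mu A \<le> measure mu B"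
  by (intro measure_mono_fmeasurable bounded_borel_fmeasurable) auto

lemma measure_ball_double_pow: "measure mu (ball a (2 ^ k * s)) \<le> D ^ k * measure mu (ball a s)"
proof (induction k)
  case (Suc k)
  have "measure mu (ball a (2 ^ Suc k * s)) \<le> D * measure mu (ball a (2 ^ k * s))"
    using measure_ball_double[of a "2 ^ k * s"] by (simp add: mult.assoc)
  also have "\<dots> \<le> D * (D ^ k * measure mu (ball a s))"
    using Suc doubling_const_ge_1 by (intro mult_left_mono) auto
  finally show ?case by simp
qed simp

lemma measure_shell_eq:
  "0 \<le> s \<Longrightarrow> measure mu (ball x R - ball x (R - s)) = measure mu (ball x R) - measure mu (ball x (R - s))"
  using emeasure_ball_finite[of x R] by (intro measure_Diff) auto

text \<open>Cover the outer shell of width \<open>s\<close> by balls of radius \<open>2 s\<close> centred at an \<open>s\<close>-net of the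
  middle sphere, and push the centres inwards by \<open>s\<close>: the balls of radius \<open>s/4\<close> around the pushed
  centres are disjoint and lie in the next shell, and doubling compares each pair of balls.\<close>

lemma measure_shell_le_inner_shell:
  assumes s: "0 < s" "4 * s \<le> R"
  shows "measure mu (ball x R - ball x (R - s)) \<le> D ^ 4 * measure mu (ball x (R - s) - ball x (R - 2 * s))"
proof -
  define \<rho> where "\<rho> = R - s/2"
  have \<rho>_pos: "0 < \<rho>" using s unfolding \<rho>_def by simp
  obtain Z where Z_fin: "finite Z" and Z_sphere: "Z \<subseteq> sphere x \<rho>"
    and Z_sep: "\<forall>z\<in>Z. \<forall>z'\<in>Z. z \<noteq> z' \<longrightarrow> s \<le> dist z z'"
    and Z_net: "\<forall>p\<in>sphere x \<rho>. \<exists>z\<in>Z. dist p z < s"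
    using finite_maximal_separated_subset[OF compact_sphere s(1), of x \<rho>] by (elim exE conjE) simp
  define l where "l = (R - 3/2 * s)/\<rho>"
  have l\<rho>: "l * \<rho> = R - 3/2 * s" using \<rho>_pos by (simp add: l_def)
  have l: "1/2 \<le> l" "l \<le> 1"
  proof -
    have "1/2 * \<rho> \<le> l * \<rho>" using l\<rho> s \<rho>_def by linarith
    then show "1/2 \<le> l" using \<rho>_pos by (rule mult_right_le_imp_le)
    have "l * \<rho> \<le> 1 * \<rho>" using l\<rho> s \<rho>_def by linarith
    then show "l \<le> 1" using \<rho>_pos by (rule mult_right_le_imp_le)
  qed
  define w where "w z = x + l *\<^sub>R (z - x)" for z
  have norm_z: "norm (z - x) = \<rho>" if "z \<in> Z" for z
    using Z_sphere that by (auto simp: dist_norm norm_minus_commute)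
  have dist_w: "dist z (w z) = s" if "z \<in> Z" for z
  proof -
    have "dist z (w z) = dist (x + 1 *\<^sub>R (z - x)) (x + l *\<^sub>R (z - x))" by (simp add: w_def)
    also have "\<dots> = (1 - l) * \<rho>" unfolding dist_along_line using l norm_z[OF that] by simp
    also have "\<dots> = \<rho> - l * \<rho>" by (simp add: algebra_simps)
    also have "\<dots> = s" using l\<rho> \<rho>_def by linarith
    finally show ?thesis .
  qed
  have dist_x_w: "dist x (w z) = R - 3/2 * s" if "z \<in> Z" for z
  proof -
    have "dist x (w z) = l * \<rho>" unfolding w_def dist_along_line_0 using l norm_z[OF that] by simp
    then show ?thesis using l\<rho> by simp
  qed
  have cover: "ball x R - ball x (R - s) \<subseteq> (\<Union>z\<in>Z. ball z (2 * s))"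
    using s Z_net unfolding \<rho>_def by (intro shell_subset_Union_balls) auto
  have inner: "(\<Union>z\<in>Z. ball (w z) (s/4)) \<subseteq> ball x (R - s) - ball x (R - 2 * s)"
  proof
    fix q assume "q \<in> (\<Union>z\<in>Z. ball (w z) (s/4))"
    then obtain z where z: "z \<in> Z" "dist (w z) q < s/4" by auto
    have "dist x q \<le> dist x (w z) + dist (w z) q" by (rule dist_triangle)
    moreover have "dist x (w z) \<le> dist x q + dist (w z) q" using dist_triangle[of x "w z" q] by (simp add: dist_commute)
    ultimately show "q \<in> ball x (R - s) - ball x (R - 2 * s)" using dist_x_w[OF z(1)] z(2) by auto
  qed
  have disj: "disjoint_family_on (\<lambda>z. ball (w z) (s/4)) Z"
    unfolding disjoint_family_on_def
  proof (intro ballI impI)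
    fix z z' assume zz: "z \<in> Z" "z' \<in> Z" "z \<noteq> z'"
    have "dist (w z) (w z') = l * dist z z'"
    proof -
      have "w z - w z' = l *\<^sub>R (z - z')" by (simp add: w_def algebra_simps)
      then show ?thesis using l by (simp add: dist_norm)
    qed
    moreover have "s \<le> dist z z'" using Z_sep zz by blast
    ultimately have "1/2 * s \<le> l * dist z z'" using l s by (intro mult_mono) auto
    then have sd: "s/2 \<le> dist (w z) (w z')" using \<open>dist (w z) (w z') = l * dist z z'\<close> by simp
    show "ball (w z) (s/4) \<inter> ball (w z') (s/4) = {}"
    proof (rule equals0I)
      fix q assume "q \<in> ball (w z) (s/4) \<inter> ball (w z') (s/4)"
      then have q: "dist (w z) q < s/4" "dist q (w z') < s/4" by (auto simp: dist_commute)
      have "dist (w z) (w z') \<le> dist (w z) q + dist q (w z')" by (rule dist_triangle)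
      then show False using q sd by linarith
    qed
  qed
  have each: "measure mu (ball z (2 * s)) \<le> D ^ 4 * measure mu (ball (w z) (s/4))" if "z \<in> Z" for z
  proof -
    have "ball z (2 * s) \<subseteq> ball (w z) (2 ^ 4 * (s/4))"
    proof
      fix q assume "q \<in> ball z (2 * s)"
      then have "dist z q < 2 * s" by simp
      moreover have "dist (w z) z = s" using dist_w[OF that] by (simp add: dist_commute)
      moreover have "dist (w z) q \<le> dist (w z) z + dist z q" by (rule dist_triangle)
      ultimately have "dist (w z) q < 4 * s" using s by linarith
      then show "q \<in> ball (w z) (2 ^ 4 * (s/4))" by simp
    qed
    then have "measure mu (ball z (2 * s)) \<le> measure mu (ball (w z) (2 ^ 4 * (s/4)))"
      by (intro measure_mono_bounded) auto
    also have "\<dots> \<le> D ^ 4 * measure mu (ball (w z) (s/4))" by (rule measure_ball_double_pow)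
    finally show ?thesis .
  qed
  have "measure mu (ball x R - ball x (R - s)) \<le> measure mu (\<Union>z\<in>Z. ball z (2 * s))"
    using cover Z_fin by (intro measure_mono_bounded) auto
  also have "\<dots> \<le> (\<Sum>z\<in>Z. measure mu (ball z (2 * s)))"
    using Z_fin by (intro measure_UNION_le) auto
  also have "\<dots> \<le> (\<Sum>z\<in>Z. D ^ 4 * measure mu (ball (w z) (s/4)))"
    using each by (intro sum_mono) auto
  also have "\<dots> = D ^ 4 * measure mu (\<Union>z\<in>Z. ball (w z) (s/4))"
    using Z_fin disj emeasure_ball_finite by (simp add: sum_distrib_left measure_finite_Union image_subset_iff less_top[symmetric])
  also have "\<dots> \<le> D ^ 4 * measure mu (ball x (R - s) - ball x (R - 2 * s))"
    using inner doubling_const_ge_1 Z_fin by (intro mult_left_mono measure_mono_bounded) auto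
  finally show ?thesis .
qed

lemma measure_shell_contract:
  assumes "0 < t" "4 * t \<le> R"
  shows "measure mu (ball x R - ball x (R - t))
    \<le> D ^ 4 / (1 + D ^ 4) * measure mu (ball x R - ball x (R - 2 * t))"
proof -
  define a where "a t = measure mu (ball x R - ball x (R - t))" for t
  have "measure mu (ball x (R - t) - ball x (R - 2 * t)) = a (2 * t) - a t"
    using measure_shell_eq[of t x "R - t"] measure_shell_eq[of "2 * t" x R] measure_shell_eq[of t x R] assms
    by (simp add: a_def algebra_simps)
  then have "a t \<le> D ^ 4 * (a (2 * t) - a t)"
    using measure_shell_le_inner_shell[OF assms, of x] by (simp add: a_def)
  then have "(1 + D ^ 4) * a t \<le> D ^ 4 * a (2 * t)" by (simp add: algebra_simps)
  moreover have "0 < 1 + D ^ 4" using doubling_const_ge_1 by (simp add: add_pos_nonneg)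
  ultimately have "a t \<le> D ^ 4 * a (2 * t) / (1 + D ^ 4)" by (simp add: pos_le_divide_eq mult.commute)
  then show ?thesis by (simp add: a_def)
qed

definition annular_decay :: "real \<Rightarrow> bool" where
  "annular_decay \<theta> \<longleftrightarrow> 0 < \<theta> \<and> \<theta> \<le> 1 \<and> (\<forall>x R s. 0 < s \<longrightarrow> s \<le> R \<longrightarrow>
     measure mu (ball x R - ball x (R - s)) \<le> 4 * (s / R) powr \<theta> * measure mu (ball x R))"

text \<open>Iterating the contraction by \<open>c = D\<^sup>4 / (1 + D\<^sup>4) < 1\<close> each time the width halves gives
  the power decay for any \<open>\<theta> \<le> 1\<close> with \<open>c * 2 powr \<theta> \<le> 1\<close>.\<close>

lemma ex_annular_decay: "\<exists>\<theta>. annular_decay \<theta>"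
proof -
  define c where "c = D ^ 4 / (1 + D ^ 4)"
  have "0 < D ^ 4" using doubling_const_ge_1 by simp
  then have c: "0 < c" "c < 1" unfolding c_def by (simp_all add: add_pos_pos)
  define \<theta> where "\<theta> = min 1 (- log 2 c)"
  have \<theta>: "0 < \<theta>" "\<theta> \<le> 1" using c unfolding \<theta>_def by auto
  have c_\<theta>: "c * 2 powr \<theta> \<le> 1"
  proof -
    have "2 powr \<theta> \<le> 2 powr (- log 2 c)" unfolding \<theta>_def by (intro powr_mono) auto
    also have "\<dots> = 1 / c" using c by (simp add: powr_minus_divide)
    finally show ?thesis using c by (simp add: field_simps)
  qed
  have base: "measure mu (ball x R - ball x (R - t)) \<le> 4 * (t / R) powr \<theta> * measure mu (ball x R)"
    if "0 < t" "t \<le> R" "R \<le> 4 * t" for x R t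
  proof -
    have "1/4 \<le> min 1 (t / R)" using that by (auto simp: field_simps)
    also have "\<dots> \<le> (t / R) powr \<theta>" using that \<theta> by (intro min_1_le_powr) auto
    finally have "measure mu (ball x R) \<le> 4 * (t / R) powr \<theta> * measure mu (ball x R)"
      using measure_nonneg[of mu "ball x R"] mult_right_mono[of 1 "4 * (t / R) powr \<theta>"] by simp
    moreover have "measure mu (ball x R - ball x (R - t)) \<le> measure mu (ball x R)"
      by (intro measure_mono_bounded) auto
    ultimately show ?thesis by linarith
  qed
  have decay: "measure mu (ball x R - ball x (R - t)) \<le> 4 * (t / R) powr \<theta> * measure mu (ball x R)"
    if "0 < t" "t \<le> R" "R \<le> 2 ^ n * t" for n x R t
    using that
  proof (induction n arbitrary: t)
    case 0
    then show ?case by (intro base) auto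
  next
    case (Suc n)
    show ?case
    proof (cases "R \<le> 4 * t")
      case True
      then show ?thesis using Suc.prems by (intro base)
    next
      case False
      have IH: "measure mu (ball x R - ball x (R - 2 * t)) \<le> 4 * (2 * t / R) powr \<theta> * measure mu (ball x R)"
        using Suc False by (intro Suc.IH) (auto simp: algebra_simps)
      have "measure mu (ball x R - ball x (R - t)) \<le> c * measure mu (ball x R - ball x (R - 2 * t))"
        unfolding c_def using Suc.prems False by (intro measure_shell_contract) auto
      also have "\<dots> \<le> c * (4 * (2 * t / R) powr \<theta> * measure mu (ball x R))"
        using IH c by (intro mult_left_mono) auto
      also have "(2 * t / R) powr \<theta> = 2 powr \<theta> * (t / R) powr \<theta>"
        using powr_mult[of 2 "t / R" \<theta>] Suc.prems by simp
      also have "c * (4 * (2 powr \<theta> * (t / R) powr \<theta>) * measure mu (ball x R))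
          = (c * 2 powr \<theta>) * (4 * (t / R) powr \<theta> * measure mu (ball x R))"
        by (simp add: algebra_simps)
      also have "\<dots> \<le> 4 * (t / R) powr \<theta> * measure mu (ball x R)"
        using c_\<theta> c(1) by (intro mult_left_le_one_le) auto
      finally show ?thesis .
    qed
  qed
  have "measure mu (ball x R - ball x (R - t)) \<le> 4 * (t / R) powr \<theta> * measure mu (ball x R)"
    if "0 < t" "t \<le> R" for x R t
  proof -
    obtain n where "R / t \<le> real n" using real_arch_simple by blast
    also have "real n < 2 ^ n" by (rule of_nat_less_two_power)
    finally have "R \<le> 2 ^ n * t" using that by (simp add: field_simps)
    then show ?thesis using decay that by blast
  qed
  then show ?thesis using \<theta> unfolding annular_decay_def by blast
qed

lemma set_integral_diff_le:
  fixes u :: "'a \<Rightarrow> real"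
  assumes iA: "set_integrable mu A u" and iB: "set_integrable mu B u"
    and A: "A \<in> sets borel" "bounded A" and B: "B \<in> sets borel" "bounded B"
    and bnd: "\<And>z. z \<in> A \<union> B \<Longrightarrow> \<bar>u z\<bar> \<le> M"
  shows "\<bar>(LINT z:A|mu. u z) - (LINT z:B|mu. u z)\<bar> \<le> M * measure mu ((A - B) \<union> (B - A))"
proof -
  define Dl where "Dl = (A - B) \<union> (B - A)"
  have Dl: "Dl \<in> sets mu" "emeasure mu Dl < \<infinity>"
    using bounded_borel_fmeasurable[of Dl] A B unfolding Dl_def by (auto simp: fmeasurable_def)
  have i1: "integrable mu (\<lambda>z. indicator A z *\<^sub>R u z)" using iA by (simp add: set_integrable_def)
  have i2: "integrable mu (\<lambda>z. indicator B z *\<^sub>R u z)" using iB by (simp add: set_integrable_def)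
  have i3: "integrable mu (\<lambda>z. M * indicator Dl z)"
    using Dl by (intro integrable_mult_right integrable_real_indicator) auto
  have "(LINT z:A|mu. u z) - (LINT z:B|mu. u z) = (LINT z|mu. indicator A z *\<^sub>R u z - indicator B z *\<^sub>R u z)"
    unfolding set_lebesgue_integral_def using i1 i2 by (simp add: integral_diff)
  also have "\<bar>\<dots>\<bar> \<le> (LINT z|mu. M * indicator Dl z)"
  proof (rule integral_abs_bound_integral)
    show "integrable mu (\<lambda>z. indicator A z *\<^sub>R u z - indicator B z *\<^sub>R u z)" using i1 i2 by simp
    show "integrable mu (\<lambda>z. M * indicator Dl z)" by (rule i3)
    fix z
    show "\<bar>indicator A z *\<^sub>R u z - indicator B z *\<^sub>R u z\<bar> \<le> M * indicator Dl z"
      using bnd[of z] unfolding Dl_def by (cases "z \<in> A"; cases "z \<in> B") (auto simp: indicator_def)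
  qed
  also have "\<dots> = M * measure mu Dl" using Dl by (simp add: space_mu)
  finally show ?thesis unfolding Dl_def .
qed

lemma set_integral_abs_le:
  fixes u :: "'a \<Rightarrow> real"
  assumes iA: "set_integrable mu A u" and A: "A \<in> sets borel" "bounded A"
    and bnd: "\<And>z. z \<in> A \<Longrightarrow> \<bar>u z\<bar> \<le> M"
  shows "\<bar>LINT z:A|mu. u z\<bar> \<le> M * measure mu A"
  using set_integral_diff_le[OF iA _ A, of "{}" M] bnd by (simp add: set_integrable_def set_lebesgue_integral_def)

lemma measure_diff_le_sym_diff:
  assumes A: "A \<in> sets borel" "bounded A" and B: "B \<in> sets borel" "bounded B"
  shows "\<bar>measure mu A - measure mu B\<bar> \<le> measure mu ((A - B) \<union> (B - A))"
proof -
  have c: "(LINT z:S|mu. (1::real)) = measure mu S" if "S \<in> sets borel" "bounded S" for S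
    using bounded_borel_fmeasurable[OF that(2,1)] by (simp add: set_lebesgue_integral_def space_mu fmeasurable_def)
  have ii: "set_integrable mu S (\<lambda>_. 1::real)" if "S \<in> sets borel" "bounded S" for S
    using bounded_borel_fmeasurable[OF that(2,1)] unfolding set_integrable_def
    by (intro integrableI_bounded_set_indicator[where B=1]) (auto simp: fmeasurable_def)
  have "\<bar>(LINT z:A|mu. (1::real)) - (LINT z:B|mu. 1)\<bar> \<le> 1 * measure mu ((A - B) \<union> (B - A))"
    by (rule set_integral_diff_le[OF ii[OF A] ii[OF B] A B]) simp
  then show ?thesis using c[OF A] c[OF B] by simp
qed

lemma measure_sym_diff_balls_le:
  assumes decay: "annular_decay \<theta>" and r: "0 < r1" "\<bar>r1 - r2\<bar> \<le> dist x y" "4 * dist x y < r1"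
  shows "measure mu ((ball x r1 - ball y r2) \<union> (ball y r2 - ball x r1))
    \<le> 16 * D * (dist x y / r1) powr \<theta> * measure mu (ball x r1)"
proof (cases "x = y")
  case True
  then show ?thesis using r doubling_const_ge_1 by simp
next
  case False
  define t where "t = dist x y"
  have t: "0 < t" using False by (simp add: t_def)
  define R where "R = r1 + 2 * t"
  have "4 * t \<le> R" using r t by (simp add: R_def t_def)
  have \<theta>: "0 < \<theta>" "\<theta> \<le> 1" using decay unfolding annular_decay_def by auto
  have "(ball x r1 - ball y r2) \<union> (ball y r2 - ball x r1) \<subseteq> ball x R - ball x (R - 4 * t)"
  proof
    fix z assume "z \<in> (ball x r1 - ball y r2) \<union> (ball y r2 - ball x r1)"
    moreover have "dist x z \<le> t + dist y z" "dist y z \<le> t + dist x z"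
      using dist_triangle[of x z y] dist_triangle[of y z x] by (simp_all add: t_def dist_commute)
    ultimately show "z \<in> ball x R - ball x (R - 4 * t)"
      using r unfolding R_def t_def by auto
  qed
  then have "measure mu ((ball x r1 - ball y r2) \<union> (ball y r2 - ball x r1))
      \<le> measure mu (ball x R - ball x (R - 4 * t))"
    by (intro measure_mono_bounded) auto
  also have "\<dots> \<le> 4 * (4 * t / R) powr \<theta> * measure mu (ball x R)"
    using decay unfolding annular_decay_def by (meson \<open>0 < t\<close> \<open>4 * t \<le> R\<close> mult_pos_pos zero_less_numeral)
  also have "\<dots> \<le> 4 * (4 * (t / r1) powr \<theta>) * (D * measure mu (ball x r1))"
  proof (intro mult_mono mult_left_mono)
    have "(4 * t / R) powr \<theta> \<le> (4 * (t / r1)) powr \<theta>"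
      using \<theta> t r unfolding R_def by (intro powr_mono2) (auto simp: field_simps)
    also have "\<dots> = 4 powr \<theta> * (t / r1) powr \<theta>" using t r by (intro powr_mult)
    also have "\<dots> \<le> 4 * (t / r1) powr \<theta>"
      using \<theta> powr_mono[of \<theta> 1 4] by (intro mult_right_mono) auto
    finally show "(4 * t / R) powr \<theta> \<le> 4 * (t / r1) powr \<theta>" .
    have "measure mu (ball x R) \<le> measure mu (ball x (2 * r1))"
      using r t unfolding R_def t_def by (intro measure_mono_bounded) auto
    also have "\<dots> \<le> D * measure mu (ball x r1)" by (rule measure_ball_double)
    finally show "measure mu (ball x R) \<le> D * measure mu (ball x r1)" .
  qed (use doubling_const_ge_1 in auto)
  finally show ?thesis by (simp add: t_def algebra_simps)
qed

lemma ball_average_diff_le: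
  fixes u :: "'a \<Rightarrow> real"
  assumes decay: "annular_decay \<theta>" and r: "0 < r1" "0 < r2" "\<bar>r1 - r2\<bar> \<le> dist x y"
    and u: "set_integrable mu (ball x r1) u" "set_integrable mu (ball y r2) u"
    and bound: "\<And>z. z \<in> ball x r1 \<union> ball y r2 \<Longrightarrow> \<bar>u z\<bar> \<le> M"
  shows "\<bar>1 / measure mu (ball x r1) * (LINT z:ball x r1|mu. u z)
      - 1 / measure mu (ball y r2) * (LINT z:ball y r2|mu. u z)\<bar>
    \<le> 32 * D * M * (dist x y / r1) powr \<theta>"
proof -
  define t where "t = dist x y"
  define m1 where "m1 = measure mu (ball x r1)"
  define m2 where "m2 = measure mu (ball y r2)"
  define I1 where "I1 = (LINT z:ball x r1|mu. u z)"
  define I2 where "I2 = (LINT z:ball y r2|mu. u z)"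
  have m: "0 < m1" "0 < m2" unfolding m1_def m2_def using measure_ball_pos r by auto
  have M: "0 \<le> M" using bound[of x] r(1) by force
  have I: "\<bar>I1\<bar> \<le> M * m1" "\<bar>I2\<bar> \<le> M * m2" unfolding I1_def I2_def m1_def m2_def
    by (auto intro!: set_integral_abs_le u bound)
  have \<theta>: "0 < \<theta>" "\<theta> \<le> 1" using decay unfolding annular_decay_def by auto
  have "\<bar>1/m1 * I1 - 1/m2 * I2\<bar> \<le> 32 * D * M * (t / r1) powr \<theta>"
  proof (cases "r1 \<le> 4 * t")
    case True
    \<comment> \<open>Far-apart centres: the trivial bound \<open>2 M\<close> already suffices.\<close>
    have avg: "\<bar>1/m1 * I1\<bar> \<le> M" "\<bar>1/m2 * I2\<bar> \<le> M" using I m by (simp_all add: abs_mult field_simps)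
    have "1/4 \<le> min 1 (t / r1)" using True r by (auto simp: field_simps)
    also have "\<dots> \<le> (t / r1) powr \<theta>" using r \<theta> by (intro min_1_le_powr) (auto simp: t_def)
    finally have "8 * M * (1/4) \<le> 8 * M * (t / r1) powr \<theta>" using M by (intro mult_left_mono) auto
    moreover have "8 * M * (t / r1) powr \<theta> \<le> 32 * D * M * (t / r1) powr \<theta>"
      using M doubling_const_ge_1 by (intro mult_right_mono) auto
    ultimately show ?thesis using avg by linarith
  next
    case False
    define \<Delta> where "\<Delta> = measure mu ((ball x r1 - ball y r2) \<union> (ball y r2 - ball x r1))"
    have "\<bar>I1 - I2\<bar> \<le> M * \<Delta>" unfolding I1_def I2_def \<Delta>_def
      by (rule set_integral_diff_le[OF u]) (auto intro: bound)
    moreover have "\<bar>m1 - m2\<bar> \<le> \<Delta>" unfolding m1_def m2_def \<Delta>_def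
      by (rule measure_diff_le_sym_diff) auto
    ultimately have "\<bar>1/m1 * I1 - 1/m2 * I2\<bar> \<le> 2 * M * \<Delta> / m1"
      using abs_quotient_diff_le m I(2) M by blast
    also have "\<Delta> \<le> 16 * D * (t / r1) powr \<theta> * m1"
      unfolding \<Delta>_def m1_def t_def using False r by (intro measure_sym_diff_balls_le[OF decay]) (auto simp: t_def)
    then have "2 * M * \<Delta> / m1 \<le> 2 * M * (16 * D * (t / r1) powr \<theta> * m1) / m1"
      using M m by (intro divide_right_mono mult_left_mono) auto
    finally show ?thesis using m by (simp add: algebra_simps)
  qed
  then show ?thesis unfolding t_def m1_def m2_def I1_def I2_def .
qed

lemma set_integrable_ball:
  fixes u :: "'a \<Rightarrow> real"
  assumes K: "compact K" "continuous_on K u" and ball: "ball x s \<subseteq> K"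
  shows "set_integrable mu (ball x s) u"
  unfolding set_integrable_def
proof (rule integrableI_bounded_set[where A="ball x s" and B="sup_norm_on K u"])
  have "continuous_on (ball x s) u" using K(2) ball by (rule continuous_on_subset)
  then have "(\<lambda>z. indicator (ball x s) z *\<^sub>R u z) \<in> borel_measurable borel"
    by (intro borel_measurable_continuous_on_indicator) auto
  then show "(\<lambda>z. indicator (ball x s) z *\<^sub>R u z) \<in> borel_measurable mu"
    unfolding measurable_cong_sets[OF sets_mu refl] .
  show "AE z in mu. z \<in> ball x s \<longrightarrow> norm (indicator (ball x s) z *\<^sub>R u z) \<le> sup_norm_on K u"
    using abs_le_sup_norm_on[OF K] ball by (intro AE_I2) auto
  show "emeasure mu (ball x s) < \<infinity>" by (rule emeasure_ball_finite)
qed auto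

end

lemma doubling_measure_imp_doubling:
  fixes mu :: "'a::euclidean_space measure"
  assumes "doubling_measure mu"
  shows "\<exists>D. doubling mu D"
proof -
  have se: "sets mu = sets borel"
    and pf: "\<And>a s. s > 0 \<Longrightarrow> 0 < emeasure mu (ball a s) \<and> emeasure mu (ball a s) < \<infinity>"
    using assms unfolding doubling_measure_def by auto
  obtain D :: real where D: "D \<ge> 1" "\<And>a s. s > 0 \<Longrightarrow> emeasure mu (ball a (2 * s)) \<le> ennreal D * emeasure mu (ball a s)"
    using assms unfolding doubling_measure_def by auto
  have fin: "emeasure mu (ball a s) < \<infinity>" for a s
    using pf[of s a] by (cases "s > 0") (auto simp: not_less ball_empty)
  have eq: "emeasure mu (ball a s) = ennreal (measure mu (ball a s))" for a s
    using fin[of a s] by (intro emeasure_eq_ennreal_measure) auto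
  have pos: "0 < measure mu (ball a s)" if "s > 0" for a s
    using pf[OF that, of a] eq[of a s] by simp
  have dbl: "measure mu (ball a (2 * s)) \<le> D * measure mu (ball a s)" for a s
  proof (cases "s > 0")
    case True
    have "ennreal (measure mu (ball a (2 * s))) \<le> ennreal D * ennreal (measure mu (ball a s))"
      using D(2)[OF True, of a] eq by simp
    also have "\<dots> = ennreal (D * measure mu (ball a s))" using D(1) by (simp add: ennreal_mult)
    finally show ?thesis using D(1) by (subst (asm) ennreal_le_iff) auto
  next
    case False
    then have "ball a (2 * s) = {}" "ball a s = {}" by (auto intro: ball_empty)
    then show ?thesis by (simp del: ball_eq_empty)
  qed
  show ?thesis unfolding doubling_def using se fin pos D(1) dbl by blast
qed

section \<open>The operator T\<close>

context doubling
begin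

lemma T_op_diff_le:
  fixes u :: "'a \<Rightarrow> real"
  assumes decay: "annular_decay \<theta>"
    and Omega: "open Omega" "bounded Omega" "convex Omega"
    and r: "admissible_radius Omega r" "\<forall>x\<in>Omega. \<forall>y\<in>Omega. \<bar>r x - r y\<bar> \<le> dist x y"
    and \<alpha>: "0 \<le> \<alpha>" "\<alpha> \<le> 1" and u: "continuous_on (closure Omega) u"
    and G: "G \<subseteq> Omega" and xy: "x \<in> G" "y \<in> G"
  shows "\<bar>T_op mu r \<alpha> u x - T_op mu r \<alpha> u y\<bar>
    \<le> \<alpha> * lowest_modulus u (convex hull (\<Union>z\<in>G. ball z (r z))) (dist x y)
      + (1 - \<alpha>) * (32 * D) * sup_norm_on (closure Omega) u * (dist x y / r x) powr \<theta>"
proof -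
  let ?H = "convex hull (\<Union>z\<in>G. ball z (r z))"
  let ?N = "sup_norm_on (closure Omega) u"
  have K: "compact (closure Omega)" using Omega(2) by (simp add: compact_closure)
  have H: "?H \<subseteq> closure Omega"
    using convex_hull_balls_subset[OF Omega(1,3) r(1) G] closure_subset by blast
  have ball_H: "ball z (r z) \<subseteq> ?H" if "z \<in> G" for z
    using that hull_subset[of "\<Union>z\<in>G. ball z (r z)"] by blast
  have r_xy: "0 < r x" "0 < r y" "\<bar>r x - r y\<bar> \<le> dist x y"
    using r G xy unfolding admissible_radius_def by auto
  have S: "\<bar>S_op r u x - S_op r u y\<bar> \<le> lowest_modulus u ?H (dist x y)"
    using abs_le_sup_norm_on[OF K u] H
    by (intro S_op_diff_le[OF r_xy ball_H[OF xy(1)] ball_H[OF xy(2)] _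
          concave_modulus_lowest_modulus[OF K u H] abs_diff_le_lowest_modulus[OF K u H]]) auto
  have balls: "ball z (r z) \<subseteq> closure Omega" if "z \<in> G" for z
    using that ball_H H by blast
  have bound: "\<bar>u z\<bar> \<le> ?N" if "z \<in> ball x (r x) \<union> ball y (r y)" for z
    using that balls[OF xy(1)] balls[OF xy(2)] abs_le_sup_norm_on[OF K u] by blast
  have M: "\<bar>M_op mu r u x - M_op mu r u y\<bar> \<le> 32 * D * ?N * (dist x y / r x) powr \<theta>"
    unfolding M_op_def using balls xy
    by (intro ball_average_diff_le[OF decay r_xy _ _ bound] set_integrable_ball[OF K u]) auto
  show ?thesis
    using abs_convex_comb_diff_le[OF \<alpha> S M] unfolding T_op_def by (simp add: mult.assoc)
qed

lemma lowest_modulus_T_op_le: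
  fixes u :: "'a \<Rightarrow> real"
  assumes decay: "annular_decay \<theta>"
    and Omega: "open Omega" "bounded Omega" "convex Omega"
    and r: "admissible_radius Omega r" "\<forall>x\<in>Omega. \<forall>y\<in>Omega. \<bar>r x - r y\<bar> \<le> dist x y"
    and \<alpha>: "0 \<le> \<alpha>" "\<alpha> \<le> 1" and u: "continuous_on (closure Omega) u"
    and G: "G \<subseteq> Omega" "G \<noteq> {}" and t1: "0 < t1" "\<forall>x\<in>G. t1 \<le> r x" and t: "0 \<le> t"
  shows "lowest_modulus (T_op mu r \<alpha> u) G t
    \<le> \<alpha> * lowest_modulus u (convex hull (\<Union>z\<in>G. ball z (r z))) t
      + (1 - \<alpha>) * (32 * D) * sup_norm_on (closure Omega) u * t1 powr (- \<theta>) * t powr \<theta>"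
proof -
  let ?H = "convex hull (\<Union>z\<in>G. ball z (r z))"
  let ?N = "sup_norm_on (closure Omega) u"
  define c where "c = (1 - \<alpha>) * (32 * D) * ?N * t1 powr (- \<theta>)"
  have K: "compact (closure Omega)" using Omega(2) by (simp add: compact_closure)
  have H: "?H \<subseteq> closure Omega"
    using convex_hull_balls_subset[OF Omega(1,3) r(1) G(1)] closure_subset by blast
  have \<theta>: "0 < \<theta>" "\<theta> \<le> 1" using decay unfolding annular_decay_def by auto
  obtain z where "z \<in> G" using G(2) by blast
  then have "0 \<le> ?N" using abs_le_sup_norm_on[OF K u, of z] G(1) closure_subset by fastforce
  then have c: "0 \<le> c" using \<alpha> doubling_const_ge_1 unfolding c_def by simp
  have "\<bar>T_op mu r \<alpha> u x - T_op mu r \<alpha> u y\<bar> \<le> \<alpha> * lowest_modulus u ?H (dist x y) + c * dist x y powr \<theta>"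
    if xy: "x \<in> G" "y \<in> G" for x y
  proof -
    have "(dist x y / r x) powr \<theta> \<le> (dist x y / t1) powr \<theta>"
      using \<theta> t1 xy by (intro powr_mono2 divide_left_mono) auto
    also have "\<dots> = t1 powr (- \<theta>) * dist x y powr \<theta>"
      by (simp add: powr_divide powr_minus_divide)
    finally have "(1 - \<alpha>) * (32 * D) * ?N * (dist x y / r x) powr \<theta> \<le> c * dist x y powr \<theta>"
      using \<open>0 \<le> ?N\<close> \<alpha> doubling_const_ge_1 unfolding c_def mult.assoc by (intro mult_left_mono) auto
    then show ?thesis using T_op_diff_le[OF decay Omega r \<alpha> u G(1) xy] by linarith
  qed
  then have "lowest_modulus (T_op mu r \<alpha> u) G t \<le> \<alpha> * lowest_modulus u ?H t + c * t powr \<theta>"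
    by (intro lowest_modulus_le_lincomb concave_modulus_lowest_modulus[OF K u H]
        concave_modulus_powr \<theta> \<alpha>(1) c t) blast
  then show ?thesis unfolding c_def .
qed

end

theorem proposition2p1:
  fixes mu :: "'a::euclidean_space measure"
  assumes "doubling_measure mu"
  shows "\<exists>C::real. C > 0 \<and> (\<exists>\<theta>::real. 0 < \<theta> \<and> \<theta> \<le> 1 \<and>
    (\<forall>(Omega::'a set) (r::'a \<Rightarrow> real) (\<alpha>::real) (u::'a \<Rightarrow> real) (G::'a set).
       open Omega \<and> connected Omega \<and> Omega \<noteq> {} \<and> bounded Omega \<and> convex Omega \<and>
       admissible_radius Omega r \<and>
       (\<forall>x\<in>Omega. \<forall>y\<in>Omega. \<bar>r x - r y\<bar> \<le> dist x y) \<and>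
       0 \<le> \<alpha> \<and> \<alpha> < 1 \<and>
       continuous_on (closure Omega) u \<and>
       open G \<and> connected G \<and> G \<noteq> {} \<and> convex G \<and> G \<subset> Omega \<and>
       closure G \<subseteq> Omega \<and> compact (closure G)
     \<longrightarrow>
       (\<forall>x\<in>G. \<forall>y\<in>G.
          \<bar>T_op mu r \<alpha> u x - T_op mu r \<alpha> u y\<bar>
            \<le> \<alpha> * lowest_modulus u (convex hull (\<Union>z\<in>G. ball z (r z))) (dist x y)
              + (1 - \<alpha>) * C * sup_norm_on (closure Omega) u * (dist x y / r x) powr \<theta>)
       \<and>
       (\<forall>t1>0. (\<forall>x\<in>G. t1 \<le> r x) \<longrightarrow>
          (\<forall>t. 0 \<le> t \<and> t \<le> diameter G \<longrightarrow>
             lowest_modulus (T_op mu r \<alpha> u) G t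
               \<le> \<alpha> * lowest_modulus u (convex hull (\<Union>z\<in>G. ball z (r z))) t
                 + (1 - \<alpha>) * C * sup_norm_on (closure Omega) u * t1 powr (- \<theta>) * t powr \<theta>))))"
proof -
  obtain D where "doubling mu D" using doubling_measure_imp_doubling[OF assms] by blast
  then interpret doubling mu D .
  obtain \<theta> where decay: "annular_decay \<theta>" using ex_annular_decay by blast
  show ?thesis
  proof (rule exI[of _ "32 * D"], intro conjI exI[of _ \<theta>] allI impI)
    show "0 < 32 * D" using doubling_const_ge_1 by simp
    show "0 < \<theta>" "\<theta> \<le> 1" using decay unfolding annular_decay_def by auto
  qed (blast intro: T_op_diff_le[OF decay] lowest_modulus_T_op_le[OF decay] less_imp_le)+
qed

end
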